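(* Let $\mathcal{K}\subseteq\mathbb{R}\cup\{\pm\infty\}$ have nonzero Lebesgue measure, let $\varpi:\mathcal{K}\to\mathbb{R}_{\geq 0}$ be Lebesgue integrable with only countably (finitely or infinitely) many zeros, and let $d\in\mathbb{N}$. Let $\mathbf{f}(\cdot)=\mathrm{Col}_{i=1}^d f_i(\cdot)\in\mathbb{L}^2_{\varpi}(\mathcal{K};\mathbb{R}^d)$ satisfy $$\int_{\mathcal{K}}\varpi(\tau)\mathbf{f}(\tau)\mathbf{f}^\top(\tau)\,d\tau\succ 0 .$$ For $n\in\mathbb{N}$ define $F(\tau)=\mathbf{f}(\tau)\otimes I_n\in\mathbb{R}^{dn\times n}$ and the matrix $\mathsf{F}\in\mathbb{R}^{d\times d}$ by $\mathsf{F}^{-1}=\int_{\mathcal{K}}\varpi(\tau)\mathbf{f}(\tau)\mathbf{f}^\top(\tau)\,d\tau$. Then for all $\mathbf{x}(\cdot)\in\mathbb{L}^2_{\varpi}(\mathcal{K};\mathbb{R}^n)$ and all symmetric $U\succeq 0$ in $\mathbb{R}^{n\times n}$, $$\int_{\mathcal{K}}\varpi(\tau)\mathbf{x}^\top(\tau)U\mathbf{x}(\tau)\,d\tau\;\geq\;\boldsymbol{\vartheta}^\top(\mathsf{F}\otimes U)\boldsymbol{\vartheta},\qquad \boldsymbol{\vartheta}:=\int_{\mathcal{K}}\varpi(\tau)F(\tau)\mathbf{x}(\tau)\,d\tau\in\mathbb{R}^{dn}.$$ Moreover (optimality), if $U\succ 0$, then for every $\boldsymbol{\omega}\in\mathbb{R}^{dn}$,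 $$2\boldsymbol{\vartheta}^\top(I_d\otimes U)\boldsymbol{\omega}-\boldsymbol{\omega}^\top(\mathsf{F}^{-1}\otimes U)\boldsymbol{\omega}\;\leq\;\boldsymbol{\vartheta}^\top(\mathsf{F}\otimes U)\boldsymbol{\vartheta},$$ with equality for $\boldsymbol{\omega}=(\mathsf{F}\otimes I_n)\boldsymbol{\vartheta}$; here each left-hand side is a lower bound for $\int_{\mathcal{K}}\varpi\,\mathbf{x}^\top U\mathbf{x}\,d\tau$ (obtained from $\int_{\mathcal{K}}\varpi(\tau)(\mathbf{x}(\tau)-F^\top(\tau)\boldsymbol{\omega})^\top U(\mathbf{x}(\tau)-F^\top(\tau)\boldsymbol{\omega})\,d\tau\ge 0$), so the bound above is the largest among them.
   Context: For $m\in\mathbb{N}$, $\mathbb{L}^2_{\varpi}(\mathcal{K};\mathbb{R}^m)$ denotes the set of Lebesgue integrable functions $\phi:\mathcal{K}\to\mathbb{R}^m$ with $\int_{\mathcal{K}}\varpi(\tau)\phi^\top(\tau)\phi(\tau)\,d\tau<\infty$. $\mathrm{Col}_{i=1}^d f_i$ denotes the column vector $[f_1,\dots,f_d]^\top$; $\otimes$ is the Kronecker product and $I_n$ the $n\times n$ identity. *)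

theory Defs
  imports "HOL-Analysis.Analysis"
begin

text \<open>Kronecker product of matrices; the row/column index of the product is the pair
  (outer index, inner index), i.e. lexicographic block structure.\<close>
definition kron :: "real^'b^'a \<Rightarrow> real^'d^'c \<Rightarrow> real^('b \<times> 'd)^('a \<times> 'c)" where
  "kron A B = (\<chi> p q. A $ fst p $ fst q * B $ snd p $ snd q)"

text \<open>Kronecker product of a column vector v (a d x 1 matrix) with a matrix B;
  the singleton column index is dropped.\<close>
definition kron_col :: "real^'a \<Rightarrow> real^'c^'b \<Rightarrow> real^'c^('a \<times> 'b)" where
  "kron_col v B = (\<chi> p k. v $ fst p * B $ snd p $ k)"

definition outer :: "real^'a \<Rightarrow> real^'b \<Rightarrow> real^'b^'a" where
  "outer u v = (\<chi> i j. u $ i * v $ j)"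

definition pos_def :: "real^'n^'n \<Rightarrow> bool" where
  "pos_def A \<longleftrightarrow> (\<forall>v. v \<noteq> 0 \<longrightarrow> v \<bullet> (A *v v) > 0)"

definition pos_semidef :: "real^'n^'n \<Rightarrow> bool" where
  "pos_semidef A \<longleftrightarrow> (\<forall>v. v \<bullet> (A *v v) \<ge> 0)"

definition L2w :: "real set \<Rightarrow> (real \<Rightarrow> real) \<Rightarrow> (real \<Rightarrow> real^'m) \<Rightarrow> bool" where
  "L2w K w \<phi> \<longleftrightarrow> set_borel_measurable lebesgue K \<phi> \<and>
     set_integrable lebesgue K (\<lambda>t. w t * (\<phi> t \<bullet> \<phi> t))"

end

(*
  For every \<omega>, the integral of w (x - F\<^sup>T \<omega>)\<^sup>T U (x - F\<^sup>T \<omega>) is nonnegative; expanding it with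
  F U = (I \<otimes> U) F and F U F\<^sup>T = f f\<^sup>T \<otimes> U gives
    J \<ge> 2 \<theta>\<^sup>T (I \<otimes> U) \<omega> - \<omega>\<^sup>T (G \<otimes> U) \<omega>,   G = \<integral> w f f\<^sup>T.
  The right-hand side is a concave quadratic in \<omega> (the case x = 0 shows G \<otimes> U \<succeq> 0) whose
  stationarity condition (G \<otimes> U) \<omega> = (I \<otimes> U) \<theta> is solved by \<omega> = (G\<^sup>-\<^sup>1 \<otimes> I) \<theta>, where it takes
  the value \<theta>\<^sup>T (G\<^sup>-\<^sup>1 \<otimes> U) \<theta>.
*)
theory Submission
  imports Defs
begin

lemma outer_nth [simp]: "outer u v $ i $ j = u $ i * v $ j"
  by (simp add: outer_def)

lemma kron_nth [simp]: "kron A B $ p $ q = A $ fst p $ fst q * B $ snd p $ snd q"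
  by (simp add: kron_def)

lemma kron_col_nth [simp]: "kron_col v B $ p $ k = v $ fst p * B $ snd p $ k"
  by (simp add: kron_col_def)

lemma kron_col_mat1_mult_nth: "(kron_col v (mat 1) *v y) $ p = v $ fst p * y $ snd p"
  unfolding matrix_vector_mult_def by (simp add: mat_def if_distrib[of "\<lambda>c. _ * c * _"] cong: if_cong)

lemma transpose_outer: "transpose (outer u v) = outer v u"
  by (simp add: vec_eq_iff transpose_def)

lemma transpose_kron: "transpose (kron A B) = kron (transpose A) (transpose B)"
  by (simp add: vec_eq_iff transpose_def)

lemma sum_UNIV_prod:
  "(\<Sum>p\<in>(UNIV::('a::finite \<times> 'b::finite) set). g p) = (\<Sum>i\<in>UNIV. \<Sum>k\<in>UNIV. g (i, k))"
  by (simp add: sum.cartesian_product)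

lemma kron_mult: "kron A B ** kron C D = kron (A ** C) (B ** D)"
  by (simp add: vec_eq_iff matrix_matrix_mult_def sum_UNIV_prod sum_product algebra_simps)

lemma kron_mult_kron_col: "kron A B ** kron_col v C = kron_col (A *v v) (B ** C)"
  by (simp add: vec_eq_iff matrix_matrix_mult_def matrix_vector_mult_def sum_UNIV_prod
      sum_product algebra_simps)

lemma kron_col_mult: "kron_col v A ** B = kron_col v (A ** B)"
  by (simp add: vec_eq_iff matrix_matrix_mult_def sum_distrib_left algebra_simps)

lemma kron_col_mult_transpose:
  "kron_col u A ** transpose (kron_col v B) = kron (outer u v) (A ** transpose B)"
  by (simp add: vec_eq_iff matrix_matrix_mult_def transpose_def sum_distrib_left algebra_simps)

lemma inner_matrix_vector_outer: "u \<bullet> (A *v v) = A \<bullet> outer u v"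
  by (simp add: inner_vec_def matrix_vector_mult_def sum_distrib_left mult_ac)

lemma inner_transpose_matrix_vector:
  "(transpose A *v u) \<bullet> v = u \<bullet> (A *v v)" for A :: "real^'n^'m"
  by (simp add: dot_lmul_matrix)

lemma inner_symmetric_matrix:
  fixes A :: "real^'n^'n"
  assumes "transpose A = A"
  shows "u \<bullet> (A *v v) = (A *v u) \<bullet> v"
  using inner_transpose_matrix_vector[of A u v] assms by simp

lemma kron_col_quadratic_form_expand:
  fixes p :: "real^'d" and q :: "real^'n" and U :: "real^'n^'n" and \<omega> :: "real^('d \<times> 'n)"
  assumes U: "transpose U = U"
  defines "F \<equiv> kron_col p (mat 1)"
  shows "(q - transpose F *v \<omega>) \<bullet> (U *v (q - transpose F *v \<omega>)) =
    q \<bullet> (U *v q) - 2 * ((F *v q) \<bullet> (kron (mat 1) U *v \<omega>)) + \<omega> \<bullet> (kron (outer p p) U *v \<omega>)"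
proof -
  define y where "y = transpose F *v \<omega>"
  have FU: "F ** U = kron (mat 1) U ** F"
    unfolding F_def kron_col_mult kron_mult_kron_col by simp
  have FUF: "F ** (U ** transpose F) = kron (outer p p) U"
    unfolding matrix_mul_assoc F_def kron_col_mult[of p "mat 1" U] kron_col_mult_transpose by simp
  have cross: "y \<bullet> (U *v q) = (F *v q) \<bullet> (kron (mat 1) U *v \<omega>)"
  proof -
    have "y \<bullet> (U *v q) = \<omega> \<bullet> (kron (mat 1) U *v (F *v q))"
      unfolding y_def inner_transpose_matrix_vector matrix_vector_mul_assoc FU ..
    also have "\<dots> = (kron (mat 1) U *v \<omega>) \<bullet> (F *v q)"
      by (rule inner_symmetric_matrix) (simp add: transpose_kron U)
    finally show ?thesis by (simp add: inner_commute)
  qed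
  have square: "y \<bullet> (U *v y) = \<omega> \<bullet> (kron (outer p p) U *v \<omega>)"
    unfolding y_def inner_transpose_matrix_vector matrix_vector_mul_assoc FUF ..
  have "(q - y) \<bullet> (U *v (q - y)) = q \<bullet> (U *v q) - 2 * (y \<bullet> (U *v q)) + y \<bullet> (U *v y)"
    using inner_symmetric_matrix[OF U, of q y]
    by (simp add: inner_diff_left inner_diff_right matrix_vector_mult_diff_distrib inner_commute)
  then show ?thesis
    unfolding y_def[symmetric] cross square .
qed

lemma quadratic_form_maximum:
  fixes C :: "real^'m^'m"
  assumes C_sym: "transpose C = C" and C_psd: "pos_semidef C" and z: "C *v z = b"
  shows "2 * (b \<bullet> v) - v \<bullet> (C *v v) \<le> b \<bullet> z"
    and "2 * (b \<bullet> z) - z \<bullet> (C *v z) = b \<bullet> z"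
proof -
  have Cz: "u \<bullet> (C *v z) = b \<bullet> u" for u
    by (simp add: z inner_commute)
  have "(v - z) \<bullet> (C *v (v - z)) = v \<bullet> (C *v v) - 2 * (b \<bullet> v) + b \<bullet> z"
    using inner_symmetric_matrix[OF C_sym, of z v] Cz[of v] Cz[of z]
    by (simp add: z inner_diff_left inner_diff_right matrix_vector_mult_diff_distrib)
  moreover have "0 \<le> (v - z) \<bullet> (C *v (v - z))"
    using C_psd by (simp add: pos_semidef_def)
  ultimately show "2 * (b \<bullet> v) - v \<bullet> (C *v v) \<le> b \<bullet> z"
    by linarith
  show "2 * (b \<bullet> z) - z \<bullet> (C *v z) = b \<bullet> z"
    using Cz[of z] by (simp add: inner_commute)
qed

lemma pos_def_invertible:
  assumes "pos_def (A::real^'n^'n)"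
  shows "invertible A"
proof -
  have "A *v v = 0 \<Longrightarrow> v = 0" for v
    using assms unfolding pos_def_def by (metis inner_zero_right less_irrefl)
  then show ?thesis
    by (metis matrix_left_invertible_ker invertible_left_inverse)
qed

lemma matrix_inv_right:
  assumes "invertible A"
  shows "A ** matrix_inv A = mat 1"
  using assms unfolding invertible_def matrix_inv_def by (rule someI_ex[THEN conjunct1])

lemma bounded_linear_transpose: "bounded_linear (transpose :: real^'n^'m \<Rightarrow> real^'m^'n)"
proof -
  have "linear (transpose :: real^'n^'m \<Rightarrow> real^'m^'n)"
    by (rule linearI) (simp_all add: transpose_def vec_eq_iff)
  then show ?thesis
    by (simp add: linear_conv_bounded_linear)
qed

lemma bounded_linear_kron_left_quadratic_form:
  "bounded_linear (\<lambda>M. \<omega> \<bullet> (kron M U *v \<omega>))"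
proof -
  have "linear (\<lambda>M. \<omega> \<bullet> (kron M U *v \<omega>))"
    by (rule linearI)
      (simp_all add: inner_vec_def matrix_vector_mult_def algebra_simps sum.distrib sum_distrib_left)
  then show ?thesis
    by (simp add: linear_conv_bounded_linear)
qed

lemma integrable_euclidean_componentwise:
  fixes f :: "'a \<Rightarrow> 'b::euclidean_space"
  assumes "\<And>b. b \<in> Basis \<Longrightarrow> integrable M (\<lambda>t. f t \<bullet> b)"
  shows "integrable M f"
proof -
  have "integrable M (\<lambda>t. \<Sum>b\<in>Basis. (f t \<bullet> b) *\<^sub>R b)"
    using assms by (intro Bochner_Integration.integrable_sum integrable_scaleR_left) auto
  then show ?thesis
    by (simp add: euclidean_representation)
qed

lemma set_integrable_vec_componentwise:
  fixes f :: "'x \<Rightarrow> 'a::euclidean_space^'n"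
  assumes "\<And>i. set_integrable M A (\<lambda>t. f t $ i)"
  shows "set_integrable M A f"
  unfolding set_integrable_def
proof (rule integrable_euclidean_componentwise)
  fix e :: "'a^'n" assume "e \<in> Basis"
  then obtain i u where e: "e = axis i u" by (auto simp: Basis_vec_def)
  have "integrable M (\<lambda>t. (indicator A t *\<^sub>R f t $ i) \<bullet> u)"
    using assms[of i] unfolding set_integrable_def by (rule integrable_inner_left)
  then show "integrable M (\<lambda>t. (indicator A t *\<^sub>R f t) \<bullet> e)"
    by (simp add: e inner_axis)
qed

lemma set_integral_bounded_linear:
  assumes T: "bounded_linear T" and f: "set_integrable M A f"
  shows "set_integrable M A (\<lambda>t. T (f t))"
    and "(LINT t:A|M. T (f t)) = T (LINT t:A|M. f t)"
proof -
  have scale: "(\<lambda>t. indicator A t *\<^sub>R T (f t)) = (\<lambda>t. T (indicator A t *\<^sub>R f t))"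
    by (simp add: linear_cmul[OF bounded_linear.linear[OF T]])
  show "set_integrable M A (\<lambda>t. T (f t))"
    using integrable_bounded_linear[OF T f[unfolded set_integrable_def]]
    unfolding set_integrable_def scale .
  show "(LINT t:A|M. T (f t)) = T (LINT t:A|M. f t)"
    using integral_bounded_linear[OF T f[unfolded set_integrable_def]]
    unfolding set_lebesgue_integral_def scale .
qed

lemma abs_component_product_le:
  fixes u :: "real^'m" and v :: "real^'n"
  shows "\<bar>u $ i * v $ j\<bar> \<le> u \<bullet> u + v \<bullet> v"
proof -
  have "\<bar>u $ i * v $ j\<bar> \<le> norm u * norm v"
    unfolding abs_mult by (intro mult_mono component_le_norm_cart) auto
  also have "\<dots> \<le> (norm u)\<^sup>2 + (norm v)\<^sup>2"
    using sum_squares_bound[of "norm u" "norm v"]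
      mult_nonneg_nonneg[OF norm_ge_zero norm_ge_zero, of u v]
    by linarith
  finally show ?thesis
    by (simp add: power2_norm_eq_inner)
qed

lemma set_borel_measurable_weighted_product:
  fixes a :: "'x \<Rightarrow> real^'m" and b :: "'x \<Rightarrow> real^'n"
  assumes w: "set_borel_measurable M A w"
    and a: "set_borel_measurable M A a" and b: "set_borel_measurable M A b"
  shows "set_borel_measurable M A (\<lambda>t. w t * (a t $ i * b t $ j))"
proof -
  have "(\<lambda>t. indicator A t *\<^sub>R (w t * (a t $ i * b t $ j))) =
      (\<lambda>t. (indicator A t *\<^sub>R w t) * ((indicator A t *\<^sub>R a t) $ i * (indicator A t *\<^sub>R b t) $ j))"
    by (auto simp: indicator_def fun_eq_iff)
  moreover have "(\<lambda>t. (indicator A t *\<^sub>R a t) $ i) \<in> borel_measurable M"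
    using a unfolding set_borel_measurable_def by (rule measurable_compose[OF _ borel_measurable_nth])
  moreover have "(\<lambda>t. (indicator A t *\<^sub>R b t) $ j) \<in> borel_measurable M"
    using b unfolding set_borel_measurable_def by (rule measurable_compose[OF _ borel_measurable_nth])
  ultimately show ?thesis
    using w unfolding set_borel_measurable_def by simp
qed

lemma set_integrable_weighted_product:
  fixes a :: "real \<Rightarrow> real^'m" and b :: "real \<Rightarrow> real^'n"
  assumes a: "L2w K w a" and b: "L2w K w b"
    and w: "set_borel_measurable lebesgue K w" and w_nonneg: "\<forall>t\<in>K. 0 \<le> w t"
  shows "set_integrable lebesgue K (\<lambda>t. w t * (a t $ i * b t $ j))"
proof (rule set_integrable_bound)
  show "set_integrable lebesgue K (\<lambda>t. w t * (a t \<bullet> a t) + w t * (b t \<bullet> b t))"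
    using a b unfolding L2w_def by (intro set_integral_add) auto
  show "set_borel_measurable lebesgue K (\<lambda>t. w t * (a t $ i * b t $ j))"
    using a b w unfolding L2w_def by (intro set_borel_measurable_weighted_product) auto
  show "AE t in lebesgue. t \<in> K \<longrightarrow>
      norm (w t * (a t $ i * b t $ j)) \<le> norm (w t * (a t \<bullet> a t) + w t * (b t \<bullet> b t))"
  proof (intro AE_I2 impI)
    fix t assume "t \<in> K"
    then have "\<bar>w t * (a t $ i * b t $ j)\<bar> \<le> w t * (a t \<bullet> a t + b t \<bullet> b t)"
      using w_nonneg abs_component_product_le[of "a t" i "b t" j]
      by (simp add: abs_mult mult_left_mono)
    then show "norm (w t * (a t $ i * b t $ j)) \<le> norm (w t * (a t \<bullet> a t) + w t * (b t \<bullet> b t))"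
      by (simp add: algebra_simps)
  qed
qed

lemma set_integrable_weighted_outer:
  fixes a :: "real \<Rightarrow> real^'m" and b :: "real \<Rightarrow> real^'n"
  assumes "L2w K w a" "L2w K w b" "set_borel_measurable lebesgue K w" "\<forall>t\<in>K. 0 \<le> w t"
  shows "set_integrable lebesgue K (\<lambda>t. w t *\<^sub>R outer (a t) (b t))"
  using set_integrable_weighted_product[OF assms]
  by (intro set_integrable_vec_componentwise) simp

lemma set_integrable_weighted_kron_col:
  fixes a :: "real \<Rightarrow> real^'m" and b :: "real \<Rightarrow> real^'n"
  assumes "L2w K w a" "L2w K w b" "set_borel_measurable lebesgue K w" "\<forall>t\<in>K. 0 \<le> w t"
  shows "set_integrable lebesgue K (\<lambda>t. w t *\<^sub>R (kron_col (a t) (mat 1) *v b t))"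
proof (intro set_integrable_vec_componentwise)
  fix p :: "'m \<times> 'n"
  show "set_integrable lebesgue K (\<lambda>t. (w t *\<^sub>R (kron_col (a t) (mat 1) *v b t)) $ p)"
    using set_integrable_weighted_product[OF assms] by (simp add: kron_col_mat1_mult_nth)
qed

lemma L2w_zero: "L2w K w (\<lambda>t. 0)"
  by (simp add: L2w_def set_borel_measurable_def set_integrable_def)

lemma transpose_weighted_gram:
  assumes "set_integrable M A (\<lambda>t. w t *\<^sub>R outer (f t) (f t))"
  shows "transpose (LINT t:A|M. w t *\<^sub>R outer (f t) (f t)) = (LINT t:A|M. w t *\<^sub>R outer (f t) (f t))"
  using set_integral_bounded_linear(2)[OF bounded_linear_transpose assms]
  by (simp add: transpose_scalar transpose_outer)

lemma set_integral_weighted_form_nonneg: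
  assumes "pos_semidef U" and "\<forall>t\<in>K. 0 \<le> w t"
  shows "0 \<le> (LINT t:K|M. w t * (v t \<bullet> (U *v v t)))"
  unfolding set_lebesgue_integral_def
proof (rule Bochner_Integration.integral_nonneg)
  fix t
  show "0 \<le> indicator K t *\<^sub>R (w t * (v t \<bullet> (U *v v t)))"
    using assms unfolding pos_semidef_def by (cases "t \<in> K") auto
qed

lemma set_integral_completed_square:
  fixes f :: "real \<Rightarrow> real^'d" and x :: "real \<Rightarrow> real^'n" and U :: "real^'n^'n"
    and \<omega> :: "real^('d \<times> 'n)"
  assumes f: "L2w K w f" and x: "L2w K w x"
    and w: "set_borel_measurable lebesgue K w" and w_nonneg: "\<forall>t\<in>K. 0 \<le> w t"
    and U: "transpose U = U"
  defines "F t \<equiv> kron_col (f t) (mat 1)"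
  shows "(LINT t:K|lebesgue.
        w t * ((x t - transpose (F t) *v \<omega>) \<bullet> (U *v (x t - transpose (F t) *v \<omega>))))
    = (LINT t:K|lebesgue. w t * (x t \<bullet> (U *v x t)))
      - 2 * ((LINT t:K|lebesgue. w t *\<^sub>R (F t *v x t)) \<bullet> (kron (mat 1) U *v \<omega>))
      + \<omega> \<bullet> (kron (LINT t:K|lebesgue. w t *\<^sub>R outer (f t) (f t)) U *v \<omega>)"
proof -
  let ?c = "kron (mat 1) U *v \<omega>"
  note xx = set_integral_bounded_linear[OF bounded_linear_inner_right[of U]
      set_integrable_weighted_outer[OF x x w w_nonneg]]
  note fx = set_integral_bounded_linear[OF bounded_linear_inner_left[of ?c]
      set_integrable_weighted_kron_col[OF f x w w_nonneg, folded F_def]]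
  note ff = set_integral_bounded_linear[OF bounded_linear_kron_left_quadratic_form[of \<omega> U]
      set_integrable_weighted_outer[OF f f w w_nonneg]]
  \<comment> \<open>each term is a bounded linear image of an integrable weighted moment matrix\<close>
  have "w t * ((x t - transpose (F t) *v \<omega>) \<bullet> (U *v (x t - transpose (F t) *v \<omega>)))
      = U \<bullet> (w t *\<^sub>R outer (x t) (x t)) - 2 * ((w t *\<^sub>R (F t *v x t)) \<bullet> ?c)
          + \<omega> \<bullet> (kron (w t *\<^sub>R outer (f t) (f t)) U *v \<omega>)" for t
    using inner_matrix_vector_outer[of "x t" U "x t"]
      linear_cmul[OF bounded_linear.linear[OF bounded_linear_kron_left_quadratic_form[of \<omega> U]]]
    unfolding F_def kron_col_quadratic_form_expand[OF U]
    by (simp add: algebra_simps)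
  then have "(LINT t:K|lebesgue.
        w t * ((x t - transpose (F t) *v \<omega>) \<bullet> (U *v (x t - transpose (F t) *v \<omega>))))
      = (LINT t:K|lebesgue. U \<bullet> (w t *\<^sub>R outer (x t) (x t)) - 2 * ((w t *\<^sub>R (F t *v x t)) \<bullet> ?c)
          + \<omega> \<bullet> (kron (w t *\<^sub>R outer (f t) (f t)) U *v \<omega>))"
    by simp
  also have "\<dots> = (LINT t:K|lebesgue. w t * (x t \<bullet> (U *v x t)))
      - 2 * ((LINT t:K|lebesgue. w t *\<^sub>R (F t *v x t)) \<bullet> ?c)
      + \<omega> \<bullet> (kron (LINT t:K|lebesgue. w t *\<^sub>R outer (f t) (f t)) U *v \<omega>)"
    using xx fx ff inner_matrix_vector_outer[of "x _" U "x _"] by simp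
  finally show ?thesis .
qed

lemma weighted_quadratic_lower_bound:
  fixes f :: "real \<Rightarrow> real^'d" and x :: "real \<Rightarrow> real^'n" and U :: "real^'n^'n"
    and \<omega> :: "real^('d \<times> 'n)"
  assumes f: "L2w K w f" and x: "L2w K w x"
    and w: "set_borel_measurable lebesgue K w" and w_nonneg: "\<forall>t\<in>K. 0 \<le> w t"
    and U_sym: "transpose U = U" and U_psd: "pos_semidef U"
  shows "2 * ((LINT t:K|lebesgue. w t *\<^sub>R (kron_col (f t) (mat 1) *v x t)) \<bullet> (kron (mat 1) U *v \<omega>))
      - \<omega> \<bullet> (kron (LINT t:K|lebesgue. w t *\<^sub>R outer (f t) (f t)) U *v \<omega>)
    \<le> (LINT t:K|lebesgue. w t * (x t \<bullet> (U *v x t)))"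
  using set_integral_completed_square[OF f x w w_nonneg U_sym, of \<omega>]
    set_integral_weighted_form_nonneg[OF U_psd w_nonneg,
      where M=lebesgue and v="\<lambda>t. x t - transpose (kron_col (f t) (mat 1)) *v \<omega>"]
  by linarith

lemma pos_semidef_kron_weighted_gram:
  fixes f :: "real \<Rightarrow> real^'d" and U :: "real^'n^'n"
  assumes f: "L2w K w f"
    and w: "set_borel_measurable lebesgue K w" and w_nonneg: "\<forall>t\<in>K. 0 \<le> w t"
    and U_sym: "transpose U = U" and U_psd: "pos_semidef U"
  shows "pos_semidef (kron (LINT t:K|lebesgue. w t *\<^sub>R outer (f t) (f t)) U)"
  unfolding pos_semidef_def
  using weighted_quadratic_lower_bound[OF f L2w_zero w w_nonneg U_sym U_psd] by simp

theorem theorem1: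
  fixes K :: "real set" and w :: "real \<Rightarrow> real"
    and f :: "real \<Rightarrow> real^'d" and x :: "real \<Rightarrow> real^'n" and U :: "real^'n^'n"
  assumes K_meas: "K \<in> sets lebesgue"
    and K_pos: "emeasure lebesgue K \<noteq> 0"
    and w_nonneg: "\<forall>t\<in>K. w t \<ge> 0"
    and w_int: "set_integrable lebesgue K w"
    and w_zeros: "countable {t\<in>K. w t = 0}"
    and f_L2: "L2w K w f"
    and f_gram: "pos_def (LINT t:K|lebesgue. w t *\<^sub>R outer (f t) (f t))"
    and x_L2: "L2w K w x"
    and U_sym: "transpose U = U"
    and U_psd: "pos_semidef U"
  shows
    "let Finv = (LINT t:K|lebesgue. w t *\<^sub>R outer (f t) (f t));
         Fm = matrix_inv Finv;
         \<theta> = (LINT t:K|lebesgue. w t *\<^sub>R (kron_col (f t) (mat 1) *v x t));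
         J = (LINT t:K|lebesgue. w t * (x t \<bullet> (U *v x t)))
     in \<theta> \<bullet> (kron Fm U *v \<theta>) \<le> J
      \<and> (pos_def U \<longrightarrow>
          (\<forall>\<omega>. 2 * (\<theta> \<bullet> (kron (mat 1) U *v \<omega>)) - \<omega> \<bullet> (kron Finv U *v \<omega>)
                 \<le> \<theta> \<bullet> (kron Fm U *v \<theta>)
             \<and> 2 * (\<theta> \<bullet> (kron (mat 1) U *v \<omega>)) - \<omega> \<bullet> (kron Finv U *v \<omega>) \<le> J)
          \<and> (let \<omega> = kron Fm (mat 1) *v \<theta> in
               2 * (\<theta> \<bullet> (kron (mat 1) U *v \<omega>)) - \<omega> \<bullet> (kron Finv U *v \<omega>)
                 = \<theta> \<bullet> (kron Fm U *v \<theta>)))"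
proof -
  define G where "G = (LINT t:K|lebesgue. w t *\<^sub>R outer (f t) (f t))"
  define \<theta> where "\<theta> = (LINT t:K|lebesgue. w t *\<^sub>R (kron_col (f t) (mat 1) *v x t))"
  define J where "J = (LINT t:K|lebesgue. w t * (x t \<bullet> (U *v x t)))"
  define Fm where "Fm = matrix_inv G"
  define \<omega>\<^sub>0 where "\<omega>\<^sub>0 = kron Fm (mat 1) *v \<theta>"
  let ?B = "kron (mat 1 :: real^'d^'d) U" and ?C = "kron G U"
  have w: "set_borel_measurable lebesgue K w"
    using w_int unfolding set_integrable_def set_borel_measurable_def by (rule borel_measurable_integrable)
  have lower: "2 * (\<theta> \<bullet> (?B *v \<omega>)) - \<omega> \<bullet> (?C *v \<omega>) \<le> J" for \<omega>
    unfolding G_def \<theta>_def J_def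
    by (rule weighted_quadratic_lower_bound[OF f_L2 x_L2 w w_nonneg U_sym U_psd])
  have C_psd: "pos_semidef ?C"
    unfolding G_def by (rule pos_semidef_kron_weighted_gram[OF f_L2 w w_nonneg U_sym U_psd])
  have C_sym: "transpose ?C = ?C" and B_sym: "transpose ?B = ?B"
    using transpose_weighted_gram[OF set_integrable_weighted_outer[OF f_L2 f_L2 w w_nonneg]]
    by (simp_all add: transpose_kron U_sym G_def)
  have "G ** Fm = mat 1"
    unfolding Fm_def G_def by (intro matrix_inv_right pos_def_invertible f_gram)
  then have optimal: "?C *v \<omega>\<^sub>0 = ?B *v \<theta>"
    unfolding \<omega>\<^sub>0_def matrix_vector_mul_assoc kron_mult by simp
  have attained: "\<theta> \<bullet> (kron Fm U *v \<theta>) = (?B *v \<theta>) \<bullet> \<omega>\<^sub>0"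
    unfolding \<omega>\<^sub>0_def matrix_vector_mul_assoc kron_mult inner_symmetric_matrix[OF B_sym, symmetric]
    by simp
  have cross: "\<theta> \<bullet> (?B *v \<omega>) = (?B *v \<theta>) \<bullet> \<omega>" for \<omega>
    by (rule inner_symmetric_matrix[OF B_sym])
  note maximum = quadratic_form_maximum[OF C_sym C_psd optimal]
  show ?thesis
    unfolding Let_def G_def[symmetric] \<theta>_def[symmetric] J_def[symmetric] Fm_def[symmetric]
    using lower[of \<omega>\<^sub>0] maximum lower unfolding attained cross \<omega>\<^sub>0_def by auto
qed

end
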